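(* Let $N>p\geq1$ and let $\mathbf{U}\in\mathbb{R}^{N\times p}$ with $\mathbf{U}^T\mathbf{U}=\mathbf{I}_p$ be drawn from the Bingham distribution with $N\times N$ symmetric parameter matrix $\mathbf{A}$, i.e. with density (with respect to the normalized uniform measure on $\{\mathbf{U}:\mathbf{U}^T\mathbf{U}=\mathbf{I}_p\}$) $p_B(\mathbf{U})=\exp(-\kappa_B(\mathbf{A}))\,\mathrm{etr}(\mathbf{U}^T\mathbf{A}\mathbf{U})$, where $\kappa_B(\mathbf{A})=\ln{}_1F_1(\tfrac{p}{2};\tfrac{N}{2};\mathbf{A})$. Let $\mathbf{A}=\mathbf{U}_a\boldsymbol{\Lambda}_a\mathbf{U}_a^T$ be an eigenvalue decomposition of $\mathbf{A}$ with $\mathbf{U}_a$ orthogonal and $\boldsymbol{\Lambda}_a=\mathrm{diag}(\lambda_a(1),\dots,\lambda_a(N))$, $\lambda_a(1)\geq\dots\geq\lambda_a(N)$. Define $\mathbf{M}=\int\mathbf{U}\mathbf{U}^Tp_B(\mathbf{U})\,d\mathbf{U}$. Then the eigenvalue decomposition of $\mathbf{M}$ is $\mathbf{M}=\exp(-\kappa_B(\mathbf{A}))\,\mathbf{U}_a\boldsymbol{\Gamma}\mathbf{U}_a^T$, where $\boldsymbol{\Gamma}=\mathrm{diag}(\gamma_1,\dots,\gamma_N)$ with $\gamma_k=\frac{\partial \exp(\kappa_B(\boldsymbol{\Lambda}_a))}{\partial\lambda_a(k)}$ (that is, $\boldsymbol{\Gamma}=\partial\exp(\kappa_B(\mathbf{A}))/\partial\boldsymbol{\Lambda}_a$,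 using $\kappa_B(\mathbf{A})=\kappa_B(\boldsymbol{\Lambda}_a)$), and $\gamma_1\geq\gamma_2\geq\dots\geq\gamma_N$.
   Context: $\mathrm{etr}(\mathbf{X})=\exp(\mathrm{Tr}(\mathbf{X}))$. ${}_1F_1(a;b;\mathbf{X})$ is the confluent hypergeometric function of matrix argument, which here is the normalizing constant: ${}_1F_1(\tfrac p2;\tfrac N2;\mathbf{A})=\int\mathrm{etr}(\mathbf{U}^T\mathbf{A}\mathbf{U})\,d\mathbf{U}$ with respect to the normalized uniform measure; it depends on $\mathbf{A}$ only through its eigenvalues. *)

theory Defs
  imports "HOL-Analysis.Analysis" "HOL-Probability.Probability"
begin

definition stiefel :: "(real^'p^'n) set" where
  "stiefel = {U. transpose U ** U = mat 1}"

definition uniform_stiefel :: "(real^'p^'n) measure \<Rightarrow> bool" where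
  "uniform_stiefel \<mu> \<longleftrightarrow> sets \<mu> = sets borel \<and> prob_space \<mu> \<and>
     emeasure \<mu> (stiefel :: (real^'p^'n) set) = 1 \<and>
     (\<forall>Q::real^'n^'n. orthogonal_matrix Q \<longrightarrow> distr \<mu> \<mu> (\<lambda>U. Q ** U) = \<mu>)"

definition etr :: "real^'n^'n \<Rightarrow> real" where
  "etr X = exp (trace X)"

text \<open>1F1(p/2; N/2; A) as the normalizing integral.\<close>
definition hyp1F1 :: "(real^'p^'n) measure \<Rightarrow> real^'n^'n \<Rightarrow> real" where
  "hyp1F1 \<mu> A = (\<integral>U. etr (transpose U ** A ** U) \<partial>\<mu>)"

definition kappaB :: "(real^'p^'n) measure \<Rightarrow> real^'n^'n \<Rightarrow> real" where
  "kappaB \<mu> A = ln (hyp1F1 \<mu> A)"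

definition bingham_density :: "(real^'p^'n) measure \<Rightarrow> real^'n^'n \<Rightarrow> real^'p^'n \<Rightarrow> real" where
  "bingham_density \<mu> A U = exp (- kappaB \<mu> A) * etr (transpose U ** A ** U)"

definition diag_mat :: "real^'n \<Rightarrow> real^'n^'n" where
  "diag_mat v = (\<chi> i j. if i = j then v $ i else 0)"

end

theory Submission
  imports Defs
begin

text \<open>Since the uniform measure is invariant under \<open>U \<mapsto> U\<^sub>a U\<close>, one may assume
  \<open>A = \<Lambda>\<^sub>a\<close>; then \<open>tr(U\<^sup>T \<Lambda>\<^sub>a U) = \<Sum>\<^sub>k \<lambda>\<^sub>a(k) |u\<^sub>k|\<^sup>2\<close> with \<open>u\<^sub>k\<close> the rows of \<open>U\<close>.
  Flipping the sign of one row preserves the measure and this exponent but negates the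
  off-diagonal entries of \<open>U U\<^sup>T\<close>, so \<open>\<integral> etr(U\<^sup>T \<Lambda>\<^sub>a U) U U\<^sup>T dU\<close> is diagonal. Its \<open>k\<close>-th
  entry \<open>\<integral> etr(U\<^sup>T \<Lambda>\<^sub>a U) |u\<^sub>k|\<^sup>2 dU\<close> is the derivative of \<open>\<^sub>1F\<^sub>1\<close> in \<open>\<lambda>\<^sub>a(k)\<close>: differentiation
  under the integral sign is harmless because all integrands are bounded on the compact
  Stiefel manifold. Swapping two rows shows that these entries are ordered like the \<open>\<lambda>\<^sub>a(k)\<close>.\<close>

lemma continuous_on_matrix_mult [continuous_intros]:
  fixes f :: "'a::topological_space \<Rightarrow> real^'m^'n" and g :: "'a \<Rightarrow> real^'k^'m"
  assumes "continuous_on S f" "continuous_on S g"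
  shows "continuous_on S (\<lambda>x. f x ** g x)"
  unfolding matrix_matrix_mult_def by (intro continuous_intros assms)

lemma continuous_on_transpose [continuous_intros]:
  fixes f :: "'a::topological_space \<Rightarrow> real^'m^'n"
  shows "continuous_on S f \<Longrightarrow> continuous_on S (\<lambda>x. transpose (f x))"
  unfolding transpose_def by (intro continuous_intros)

lemma continuous_on_etr [continuous_intros]:
  fixes f :: "'a::topological_space \<Rightarrow> real^'n^'n"
  shows "continuous_on S f \<Longrightarrow> continuous_on S (\<lambda>x. etr (f x))"
  unfolding etr_def trace_def by (intro continuous_intros)

lemma bounded_linear_matrix_sandwich:
  fixes Q :: "real^'m^'n" and R :: "real^'l^'k"
  shows "bounded_linear (\<lambda>X::real^'k^'m. Q ** X ** R)"
  by (intro linear_conv_bounded_linear[THEN iffD1] linearI)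
     (simp_all add: vec_eq_iff matrix_matrix_mult_def sum_distrib_left
        distrib_left distrib_right sum.distrib mult_ac)

lemma integral_vec_nth:
  fixes f :: "'a \<Rightarrow> 'b::euclidean_space^'n"
  assumes "integrable M f"
  shows "(\<integral>x. f x \<partial>M) $ i = (\<integral>x. f x $ i \<partial>M)"
  using integral_bounded_linear[OF bounded_linear_vec_nth assms] by simp

lemma abs_exp_minus_one_minus_le: "\<bar>exp x - 1 - x\<bar> \<le> exp \<bar>x\<bar> * x\<^sup>2"
  for x :: real
proof -
  obtain s where "\<bar>s\<bar> \<le> \<bar>x\<bar>" and taylor: "exp x = 1 + x + exp s / 2 * x\<^sup>2"
    using Maclaurin_exp_le[of x 2] by (auto simp: numeral_2_eq_2)
  then have "exp s * x\<^sup>2 \<le> exp \<bar>x\<bar> * x\<^sup>2"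
    by (intro mult_right_mono) auto
  moreover have "\<bar>exp x - 1 - x\<bar> = exp s / 2 * x\<^sup>2"
    using taylor by simp
  moreover have "0 \<le> exp s * x\<^sup>2" by simp
  ultimately show ?thesis by linarith
qed

lemma abs_exp_mult_remainder_le:
  fixes t y C :: real
  assumes "\<bar>t\<bar> \<le> 1" and "\<bar>y\<bar> \<le> C"
  shows "\<bar>exp (t * y) - 1 - t * y\<bar> \<le> exp C * C\<^sup>2 * t\<^sup>2"
proof -
  have "\<bar>t * y\<bar> \<le> C"
    using assms mult_left_le_one_le[of "\<bar>y\<bar>" "\<bar>t\<bar>"] by (simp add: abs_mult)
  moreover have "(t * y)\<^sup>2 \<le> C\<^sup>2 * t\<^sup>2"
    using power_mono[OF assms(2), of 2] mult_left_mono[of "y\<^sup>2" "C\<^sup>2" "t\<^sup>2"]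
    by (simp add: power_mult_distrib mult.commute)
  ultimately have "exp \<bar>t * y\<bar> * (t * y)\<^sup>2 \<le> exp C * (C\<^sup>2 * t\<^sup>2)"
    by (intro mult_mono) auto
  then show ?thesis
    using abs_exp_minus_one_minus_le[of "t * y"] by (simp add: mult.assoc)
qed

lemma has_real_derivative_quadratic_error:
  assumes "\<forall>\<^sub>F y in at x. \<bar>h y - h x - (y - x) * d\<bar> \<le> K * (y - x)\<^sup>2"
  shows "(h has_real_derivative d) (at x)"
  unfolding has_field_derivative_iff
proof (rule LIM_zero_cancel, rule Lim_null_comparison)
  show "\<forall>\<^sub>F y in at x. norm ((h y - h x) / (y - x) - d) \<le> K * \<bar>y - x\<bar>"
    using assms eventually_neq_at_within[of x x UNIV]
  proof eventually_elim
    case (elim y)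
    then have pos: "\<bar>y - x\<bar> > 0" by simp
    have "(h y - h x) / (y - x) - d = (h y - h x - (y - x) * d) / (y - x)"
      using elim by (simp add: field_simps)
    moreover have "(y - x)\<^sup>2 = \<bar>y - x\<bar> * \<bar>y - x\<bar>"
      by (metis abs_mult_self_eq power2_eq_square)
    then have "\<bar>h y - h x - (y - x) * d\<bar> \<le> K * \<bar>y - x\<bar> * \<bar>y - x\<bar>"
      using elim by (simp only: mult.assoc)
    ultimately show ?case
      using pos by (simp add: abs_divide pos_divide_le_eq)
  qed
  show "((\<lambda>y. K * \<bar>y - x\<bar>) \<longlongrightarrow> 0) (at x)"
    by (intro tendsto_mult_right_zero tendsto_rabs_zero LIM_zero tendsto_ident_at)
qed

lemma has_real_derivative_integral_exp:
  fixes f g :: "'a \<Rightarrow> real"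
  assumes "finite_measure M"
    and [measurable]: "f \<in> borel_measurable M" "g \<in> borel_measurable M"
    and f_bound: "AE x in M. \<bar>f x\<bar> \<le> B" and g_bound: "AE x in M. \<bar>g x\<bar> \<le> C"
  shows "((\<lambda>t. \<integral>x. exp (f x + t * g x) \<partial>M) has_real_derivative (\<integral>x. exp (f x) * g x \<partial>M)) (at 0)"
proof (rule has_real_derivative_quadratic_error)
  interpret finite_measure M by fact
  have exp_f_bound: "AE x in M. exp (f x) \<le> exp B"
    using f_bound by eventually_elim simp
  have integrable_exp: "integrable M (\<lambda>x. exp (f x + t * g x))" for t
  proof (rule integrable_const_bound)
    show "AE x in M. norm (exp (f x + t * g x)) \<le> exp (B + \<bar>t\<bar> * C)"
      using f_bound g_bound
    proof eventually_elim
      case (elim x)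
      have "t * g x \<le> \<bar>t\<bar> * C"
        using elim abs_mult[of t "g x"] mult_left_mono[of "\<bar>g x\<bar>" C "\<bar>t\<bar>"] by linarith
      with elim show ?case by simp
    qed
  qed simp
  have integrable_deriv: "integrable M (\<lambda>x. exp (f x) * g x)"
  proof (rule integrable_const_bound)
    show "AE x in M. norm (exp (f x) * g x) \<le> exp B * C"
      using exp_f_bound g_bound by eventually_elim (simp add: abs_mult mult_mono)
  qed simp
  have "\<forall>\<^sub>F t in at 0. \<bar>t\<bar> < (1::real)"
    by (auto simp: eventually_at intro!: exI[of _ 1])
  then show "\<forall>\<^sub>F t in at 0. \<bar>(\<integral>x. exp (f x + t * g x) \<partial>M) - (\<integral>x. exp (f x + 0 * g x) \<partial>M)
      - (t - 0) * (\<integral>x. exp (f x) * g x \<partial>M)\<bar> \<le> exp B * exp C * C\<^sup>2 * measure M (space M) * (t - 0)\<^sup>2"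
  proof eventually_elim
    case (elim t)
    let ?R = "\<lambda>x. exp (f x) * (exp (t * g x) - 1 - t * g x)"
    have R_bound: "AE x in M. \<bar>?R x\<bar> \<le> exp B * exp C * C\<^sup>2 * t\<^sup>2"
      using exp_f_bound g_bound
    proof eventually_elim
      case (elim x)
      then have "\<bar>exp (t * g x) - 1 - t * g x\<bar> \<le> exp C * C\<^sup>2 * t\<^sup>2"
        using \<open>\<bar>t\<bar> < 1\<close> by (intro abs_exp_mult_remainder_le) auto
      with elim(1) have "exp (f x) * \<bar>exp (t * g x) - 1 - t * g x\<bar> \<le> exp B * (exp C * C\<^sup>2 * t\<^sup>2)"
        by (intro mult_mono) auto
      then show ?case by (simp add: abs_mult mult_ac)
    qed
    have integrable_R: "integrable M ?R"
      using R_bound by (intro integrable_const_bound) auto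
    have "(\<integral>x. exp (f x + t * g x) \<partial>M) - (\<integral>x. exp (f x + 0 * g x) \<partial>M) - (t - 0) * (\<integral>x. exp (f x) * g x \<partial>M)
        = (\<integral>x. exp (f x + t * g x) - exp (f x) - t * (exp (f x) * g x) \<partial>M)"
      using integrable_exp[of t] integrable_exp[of 0] integrable_deriv by simp
    also have "\<dots> = integral\<^sup>L M ?R"
      by (rule Bochner_Integration.integral_cong) (simp_all add: exp_add algebra_simps)
    finally have "\<bar>(\<integral>x. exp (f x + t * g x) \<partial>M) - (\<integral>x. exp (f x + 0 * g x) \<partial>M)
        - (t - 0) * (\<integral>x. exp (f x) * g x \<partial>M)\<bar> = \<bar>integral\<^sup>L M ?R\<bar>" by simp
    also have "\<dots> \<le> (\<integral>x. \<bar>?R x\<bar> \<partial>M)"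
      using integral_norm_bound[of M ?R] by simp
    also have "\<dots> \<le> (\<integral>x. exp B * exp C * C\<^sup>2 * t\<^sup>2 \<partial>M)"
      using integrable_R R_bound by (intro integral_mono_AE) auto
    finally show ?case by (simp add: mult_ac)
  qed
qed

lemma norm_stiefel:
  fixes V :: "real^'p^'n"
  assumes "V \<in> stiefel"
  shows "norm V = sqrt (real CARD('p))"
proof -
  have "(norm V)\<^sup>2 = trace (transpose V ** V)"
    unfolding power2_norm_eq_inner inner_vec_def trace_def matrix_matrix_mult_def transpose_def
    by (simp add: sum.swap[of _ "UNIV :: 'n set"])
  also have "\<dots> = real CARD('p)"
    using assms by (simp add: stiefel_def trace_def mat_def)
  finally show ?thesis
    by (metis norm_ge_zero real_sqrt_abs abs_of_nonneg)
qed

lemma bounded_stiefel: "bounded (stiefel :: (real^'p^'n) set)"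
  unfolding bounded_iff using norm_stiefel by (metis order_refl)

lemma
  fixes \<mu> :: "(real^'p^'n) measure"
  assumes "uniform_stiefel \<mu>"
  shows prob_space_uniform_stiefel: "prob_space \<mu>"
    and sets_uniform_stiefel: "sets \<mu> = sets borel"
    and AE_uniform_stiefel: "AE V in \<mu>. V \<in> stiefel"
proof -
  show "prob_space \<mu>" and "sets \<mu> = sets borel"
    using assms by (auto simp: uniform_stiefel_def)
  interpret prob_space \<mu> by fact
  have "emeasure \<mu> stiefel = 1"
    using assms by (simp add: uniform_stiefel_def)
  moreover from this have "stiefel \<in> sets \<mu>"
    using emeasure_notin_sets by fastforce
  ultimately show "AE V in \<mu>. V \<in> stiefel"
    by (simp add: AE_in_set_eq_1 emeasure_eq_measure)
qed

lemma borel_measurable_uniform_stiefel: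
  fixes \<mu> :: "(real^'p^'n) measure" and g :: "real^'p^'n \<Rightarrow> 'b::topological_space"
  assumes "uniform_stiefel \<mu>" "continuous_on UNIV g"
  shows "g \<in> borel_measurable \<mu>"
  using borel_measurable_continuous_onI[OF assms(2)]
  by (simp add: measurable_cong_sets[OF sets_uniform_stiefel[OF assms(1)] refl])

lemma uniform_stiefel_AE_bounded:
  fixes \<mu> :: "(real^'p^'n) measure" and g :: "real^'p^'n \<Rightarrow> 'b::real_normed_vector"
  assumes "uniform_stiefel \<mu>" "continuous_on UNIV g"
  obtains B where "AE V in \<mu>. norm (g V) \<le> B"
proof -
  have "compact (g ` closure stiefel)"
    using bounded_stiefel assms(2) by (intro compact_continuous_image) (auto intro: continuous_on_subset)
  then obtain B where B: "\<forall>y \<in> g ` closure stiefel. norm y \<le> B"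
    using compact_imp_bounded bounded_iff by metis
  have "AE V in \<mu>. norm (g V) \<le> B"
    using AE_uniform_stiefel[OF assms(1)] by eventually_elim (use B closure_subset in blast)
  then show thesis ..
qed

lemma integrable_uniform_stiefel:
  fixes \<mu> :: "(real^'p^'n) measure" and g :: "real^'p^'n \<Rightarrow> 'b::{banach, second_countable_topology}"
  assumes "uniform_stiefel \<mu>" "continuous_on UNIV g"
  shows "integrable \<mu> g"
proof -
  interpret prob_space \<mu> using prob_space_uniform_stiefel[OF assms(1)] .
  obtain B where "AE V in \<mu>. norm (g V) \<le> B"
    using uniform_stiefel_AE_bounded[OF assms] .
  then show ?thesis
    using borel_measurable_uniform_stiefel[OF assms] by (rule integrable_const_bound)
qed

lemma integral_uniform_stiefel_orthogonal:
  fixes \<mu> :: "(real^'p^'n) measure" and g :: "real^'p^'n \<Rightarrow> 'b::{banach, second_countable_topology}"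
  assumes "uniform_stiefel \<mu>" "continuous_on UNIV g" "orthogonal_matrix Q"
  shows "(\<integral>V. g V \<partial>\<mu>) = (\<integral>V. g (Q ** V) \<partial>\<mu>)"
proof -
  have "(\<lambda>V. Q ** V) \<in> measurable \<mu> \<mu>"
    using borel_measurable_uniform_stiefel[OF assms(1), of "\<lambda>V. Q ** V"]
    by (simp add: continuous_intros measurable_cong_sets[OF refl sets_uniform_stiefel[OF assms(1)]])
  moreover have "distr \<mu> \<mu> (\<lambda>V. Q ** V) = \<mu>"
    using assms by (simp add: uniform_stiefel_def)
  ultimately show ?thesis
    using integral_distr borel_measurable_uniform_stiefel[OF assms(1,2)] by metis
qed

definition trace_diag_form :: "real^'n \<Rightarrow> real^'p^'n \<Rightarrow> real" where
  "trace_diag_form v V = (\<Sum>k\<in>UNIV. v $ k * (V $ k \<bullet> V $ k))"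

lemma trace_diag_mat_congruence: "trace (transpose V ** diag_mat v ** V) = trace_diag_form v V"
  unfolding trace_def trace_diag_form_def inner_vec_def
  by (simp add: matrix_matrix_mult_def transpose_def diag_mat_def sum_distrib_left
      mult_delta_left mult_delta_right sum.delta sum.delta' mult_ac)
     (rule sum.swap)

lemma continuous_on_trace_diag_form [continuous_intros]:
  "continuous_on S f \<Longrightarrow> continuous_on S (\<lambda>x. trace_diag_form v (f x))"
  unfolding trace_diag_form_def by (intro continuous_intros)

lemma matrix_mult_transpose_nth: "(V ** transpose V) $ i $ j = V $ i \<bullet> V $ j"
  by (simp add: matrix_matrix_mult_def transpose_def inner_vec_def)

lemma orthogonal_matrix_congruence_conj:
  fixes Q D :: "real^'n^'n" and V :: "real^'p^'n"
  assumes "orthogonal_matrix Q"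
  shows "transpose (Q ** V) ** (Q ** D ** transpose Q) ** (Q ** V) = transpose V ** D ** V"
proof -
  have "transpose (Q ** V) ** (Q ** D ** transpose Q) ** (Q ** V)
      = transpose V ** (transpose Q ** Q) ** D ** (transpose Q ** Q) ** V"
    by (simp add: matrix_transpose_mul matrix_mul_assoc)
  also have "\<dots> = transpose V ** D ** V"
    using assms by (simp add: orthogonal_matrix)
  finally show ?thesis .
qed

lemma etr_outer_orthogonal_mult:
  fixes Q :: "real^'n^'n" and V :: "real^'p^'n"
  assumes "orthogonal_matrix Q"
  shows "etr (transpose (Q ** V) ** (Q ** diag_mat v ** transpose Q) ** (Q ** V)) *\<^sub>R ((Q ** V) ** transpose (Q ** V))
    = Q ** (exp (trace_diag_form v V) *\<^sub>R (V ** transpose V)) ** transpose Q"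
proof -
  have "etr (transpose (Q ** V) ** (Q ** diag_mat v ** transpose Q) ** (Q ** V)) = exp (trace_diag_form v V)"
    by (simp add: orthogonal_matrix_congruence_conj[OF assms] etr_def trace_diag_mat_congruence)
  moreover have "(Q ** V) ** transpose (Q ** V) = Q ** (V ** transpose V) ** transpose Q"
    by (simp add: matrix_transpose_mul matrix_mul_assoc)
  moreover have "Q ** (c *\<^sub>R X) ** transpose Q = c *\<^sub>R (Q ** X ** transpose Q)"
    for c :: real and X :: "real^'n^'n"
    by (simp add: matrix_scalar_ac flip: scalar_matrix_assoc)
  ultimately show ?thesis by simp
qed

lemma diag_mat_mult_nth: "(diag_mat s ** V) $ i = s $ i *\<^sub>R V $ i"
  by (simp add: diag_mat_def matrix_matrix_mult_def vec_eq_iff mult_delta_left sum.delta)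

lemma orthogonal_matrix_diag_mat:
  assumes "\<And>i. \<bar>s $ i\<bar> = 1"
  shows "orthogonal_matrix (diag_mat s)"
proof -
  have "s $ i * s $ i = 1" for i
    using assms[of i] by (metis abs_mult_self_eq mult_1)
  then show ?thesis
    by (simp add: orthogonal_matrix vec_eq_iff diag_mat_def transpose_def matrix_matrix_mult_def mat_def
        mult_delta_left mult_delta_right sum.delta)
qed

definition perm_mat :: "('n \<Rightarrow> 'n) \<Rightarrow> real^'n^'n" where
  "perm_mat \<sigma> = (\<chi> i j. if j = \<sigma> i then 1 else 0)"

lemma perm_mat_mult_nth: "(perm_mat \<sigma> ** V) $ i = V $ \<sigma> i"
  by (simp add: perm_mat_def matrix_matrix_mult_def vec_eq_iff mult_delta_left sum.delta)

lemma orthogonal_matrix_perm_mat: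
  assumes "bij \<sigma>"
  shows "orthogonal_matrix (perm_mat \<sigma>)"
proof -
  have inv: "transpose (perm_mat \<sigma>) = perm_mat (inv \<sigma>)"
    using assms by (auto simp: perm_mat_def transpose_def vec_eq_iff bij_inv_eq_iff)
  have "transpose (perm_mat \<sigma>) ** perm_mat \<sigma> = mat 1"
  proof (subst vec_eq_iff, intro allI)
    fix i
    show "(transpose (perm_mat \<sigma>) ** perm_mat \<sigma>) $ i = mat 1 $ i"
      unfolding inv perm_mat_mult_nth
      using assms by (auto simp: perm_mat_def mat_def vec_eq_iff bij_is_surj surj_f_inv_f)
  qed
  then show ?thesis
    by (simp add: orthogonal_matrix)
qed

definition bingham_gamma :: "(real^'p^'n) measure \<Rightarrow> real^'n \<Rightarrow> real^'n" where
  "bingham_gamma \<mu> v = (\<chi> k. \<integral>V. exp (trace_diag_form v V) * (V $ k \<bullet> V $ k) \<partial>\<mu>)"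

lemma integral_exp_trace_diag_form_row_inner:
  fixes \<mu> :: "(real^'p^'n) measure"
  assumes \<mu>: "uniform_stiefel \<mu>" and "i \<noteq> j"
  shows "(\<integral>V. exp (trace_diag_form v V) * (V $ i \<bullet> V $ j) \<partial>\<mu>) = 0"
proof -
  define D :: "real^'n^'n" where "D = diag_mat (\<chi> a. if a = i then -1 else 1)"
  have D: "orthogonal_matrix D"
    unfolding D_def by (rule orthogonal_matrix_diag_mat) simp
  have "(\<integral>V. exp (trace_diag_form v V) * (V $ i \<bullet> V $ j) \<partial>\<mu>)
      = (\<integral>V. exp (trace_diag_form v (D ** V)) * ((D ** V) $ i \<bullet> (D ** V) $ j) \<partial>\<mu>)"
    by (rule integral_uniform_stiefel_orthogonal[OF \<mu> _ D]) (intro continuous_intros)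
  also have "\<dots> = (\<integral>V. - (exp (trace_diag_form v V) * (V $ i \<bullet> V $ j)) \<partial>\<mu>)"
    using \<open>i \<noteq> j\<close>
    by (auto simp: D_def diag_mat_mult_nth trace_diag_form_def intro!: sum.cong Bochner_Integration.integral_cong)
  finally show ?thesis by simp
qed

lemma integral_exp_trace_diag_form_outer:
  fixes \<mu> :: "(real^'p^'n) measure"
  assumes \<mu>: "uniform_stiefel \<mu>"
  shows "(\<integral>V. exp (trace_diag_form v V) *\<^sub>R (V ** transpose V) \<partial>\<mu>) = diag_mat (bingham_gamma \<mu> v)"
proof -
  have "integrable \<mu> (\<lambda>V::real^'p^'n. exp (trace_diag_form v V) *\<^sub>R (V ** transpose V))"
    by (rule integrable_uniform_stiefel[OF \<mu>]) (intro continuous_intros)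
  moreover have "integrable \<mu> (\<lambda>V::real^'p^'n. (exp (trace_diag_form v V) *\<^sub>R (V ** transpose V)) $ i)" for i
    by (rule integrable_uniform_stiefel[OF \<mu>]) (intro continuous_intros)
  ultimately show ?thesis
    using integral_exp_trace_diag_form_row_inner[OF \<mu>]
    by (simp add: vec_eq_iff integral_vec_nth matrix_mult_transpose_nth diag_mat_def bingham_gamma_def)
qed

lemma trace_diag_form_swap_rows:
  assumes "i \<noteq> j"
  shows "trace_diag_form v V - trace_diag_form v (perm_mat (Transposition.transpose i j) ** V)
    = (v $ i - v $ j) * (V $ i \<bullet> V $ i - V $ j \<bullet> V $ j)"
proof -
  let ?\<tau> = "Transposition.transpose i j"
  have "trace_diag_form v V - trace_diag_form v (perm_mat ?\<tau> ** V)
      = (\<Sum>k\<in>UNIV. v $ k * (V $ k \<bullet> V $ k - V $ ?\<tau> k \<bullet> V $ ?\<tau> k))"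
    by (simp add: trace_diag_form_def perm_mat_mult_nth sum_subtractf right_diff_distrib)
  also have "\<dots> = (\<Sum>k\<in>{i, j}. v $ k * (V $ k \<bullet> V $ k - V $ ?\<tau> k \<bullet> V $ ?\<tau> k))"
    by (rule sum.mono_neutral_right) auto
  also have "\<dots> = (v $ i - v $ j) * (V $ i \<bullet> V $ i - V $ j \<bullet> V $ j)"
    using assms by (simp add: algebra_simps)
  finally show ?thesis .
qed

lemma exp_add_mult_diff_mult_nonneg:
  fixes c d y :: real
  assumes "0 \<le> c"
  shows "0 \<le> (exp (y + c * d) - exp y) * d"
proof (cases "0 \<le> d")
  case True
  with assms show ?thesis by (simp add: mult_nonneg_nonneg)
next
  case False
  with assms have "c * d \<le> 0" by (simp add: mult_nonneg_nonpos)
  with False show ?thesis by (simp add: mult_nonpos_nonpos)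
qed

lemma bingham_gamma_mono:
  fixes \<mu> :: "(real^'p^'n) measure"
  assumes \<mu>: "uniform_stiefel \<mu>" and "v $ j \<le> v $ i"
  shows "bingham_gamma \<mu> v $ j \<le> bingham_gamma \<mu> v $ i"
proof (cases "i = j")
  case False
  let ?P = "perm_mat (Transposition.transpose i j) :: real^'n^'n"
  let ?d = "\<lambda>V::real^'p^'n. V $ i \<bullet> V $ i - V $ j \<bullet> V $ j"
  let ?g = "\<lambda>V. exp (trace_diag_form v V) * ?d V"
  have P: "orthogonal_matrix ?P"
    by (simp add: orthogonal_matrix_perm_mat)
  have integrable: "integrable \<mu> (\<lambda>V. exp (trace_diag_form v V) * (V $ k \<bullet> V $ k))" for k
    by (rule integrable_uniform_stiefel[OF \<mu>]) (intro continuous_intros)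
  have "bingham_gamma \<mu> v $ i - bingham_gamma \<mu> v $ j = integral\<^sup>L \<mu> ?g"
    using integrable by (simp add: bingham_gamma_def right_diff_distrib)
  moreover have "integral\<^sup>L \<mu> ?g = integral\<^sup>L \<mu> (\<lambda>V. ?g (?P ** V))"
    by (rule integral_uniform_stiefel_orthogonal[OF \<mu> _ P]) (intro continuous_intros)
  moreover have "integral\<^sup>L \<mu> ?g + integral\<^sup>L \<mu> (\<lambda>V. ?g (?P ** V))
      = (\<integral>V. (exp (trace_diag_form v V) - exp (trace_diag_form v (?P ** V))) * ?d V \<partial>\<mu>)"
    by (subst Bochner_Integration.integral_add[symmetric])
       (auto simp: perm_mat_mult_nth algebra_simps intro!: integrable_uniform_stiefel[OF \<mu>] continuous_intros)
  moreover have "0 \<le> (\<integral>V. (exp (trace_diag_form v V) - exp (trace_diag_form v (?P ** V))) * ?d V \<partial>\<mu>)"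
  proof (intro integral_nonneg_AE AE_I2)
    fix V :: "real^'p^'n"
    have "trace_diag_form v V = trace_diag_form v (?P ** V) + (v $ i - v $ j) * ?d V"
      using trace_diag_form_swap_rows[OF False, of v V] by simp
    then show "0 \<le> (exp (trace_diag_form v V) - exp (trace_diag_form v (?P ** V))) * ?d V"
      using exp_add_mult_diff_mult_nonneg[of "v $ i - v $ j"] \<open>v $ j \<le> v $ i\<close> by simp
  qed
  ultimately show ?thesis by simp
qed simp

lemma hyp1F1_diag_mat: "hyp1F1 \<mu> (diag_mat v) = (\<integral>V. exp (trace_diag_form v V) \<partial>\<mu>)"
  by (simp add: hyp1F1_def etr_def trace_diag_mat_congruence)

lemma hyp1F1_diag_mat_pos:
  fixes \<mu> :: "(real^'p^'n) measure"
  assumes \<mu>: "uniform_stiefel \<mu>"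
  shows "0 < hyp1F1 \<mu> (diag_mat v)"
proof -
  interpret prob_space \<mu> using prob_space_uniform_stiefel[OF \<mu>] .
  have integrable: "integrable \<mu> (\<lambda>V. exp (trace_diag_form v V))"
    by (rule integrable_uniform_stiefel[OF \<mu>]) (intro continuous_intros)
  have "(\<integral>V. exp (trace_diag_form v V) \<partial>\<mu>) \<noteq> 0"
    using integral_nonneg_eq_0_iff_AE[OF integrable] AE_False by (simp add: less_imp_le)
  moreover have "0 \<le> (\<integral>V. exp (trace_diag_form v V) \<partial>\<mu>)"
    by (simp add: integral_nonneg_AE less_imp_le)
  ultimately show ?thesis
    unfolding hyp1F1_diag_mat by linarith
qed

lemma trace_diag_form_add_axis:
  "trace_diag_form (v + t *\<^sub>R axis k 1) V = trace_diag_form v V + t * (V $ k \<bullet> V $ k)"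
  by (simp add: trace_diag_form_def axis_def distrib_right sum.distrib mult_delta_left mult_delta_right sum.delta)

lemma has_real_derivative_exp_kappaB_diag_mat:
  fixes \<mu> :: "(real^'p^'n) measure"
  assumes \<mu>: "uniform_stiefel \<mu>"
  shows "((\<lambda>t. exp (kappaB \<mu> (diag_mat (v + t *\<^sub>R axis k 1)))) has_real_derivative bingham_gamma \<mu> v $ k) (at 0)"
proof -
  interpret prob_space \<mu> using prob_space_uniform_stiefel[OF \<mu>] .
  have exp_kappaB: "exp (kappaB \<mu> (diag_mat (v + t *\<^sub>R axis k 1)))
      = (\<integral>V. exp (trace_diag_form v V + t * (V $ k \<bullet> V $ k)) \<partial>\<mu>)" for t
    using hyp1F1_diag_mat_pos[OF \<mu>, of "v + t *\<^sub>R axis k 1"]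
    by (simp only: kappaB_def exp_ln hyp1F1_diag_mat trace_diag_form_add_axis)
  obtain B where B: "AE V in \<mu>. norm (trace_diag_form v V) \<le> B"
    using uniform_stiefel_AE_bounded[OF \<mu> continuous_on_trace_diag_form[OF continuous_on_id]] .
  have "continuous_on UNIV (\<lambda>V::real^'p^'n. V $ k \<bullet> V $ k)"
    by (intro continuous_intros)
  then obtain C where C: "AE V in \<mu>. norm (V $ k \<bullet> V $ k) \<le> C"
    using uniform_stiefel_AE_bounded[OF \<mu>] by blast
  show ?thesis
    unfolding exp_kappaB bingham_gamma_def using B C
    by (simp add: has_real_derivative_integral_exp finite_measure_axioms
        borel_measurable_uniform_stiefel[OF \<mu>] continuous_intros)
qed

theorem proposition1:
  fixes \<mu> :: "(real^'p^'n) measure"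
    and A Ua :: "real^'n^'n" and la :: "real^'n"
    and idx :: "nat \<Rightarrow> 'n"
  assumes "CARD('p) < CARD('n)"
    and "uniform_stiefel \<mu>"
    and "transpose A = A"
    and "orthogonal_matrix Ua"
    and "A = Ua ** diag_mat la ** transpose Ua"
    and "bij_betw idx {1..CARD('n)} UNIV"
    and "\<forall>i j. 1 \<le> i \<and> i \<le> j \<and> j \<le> CARD('n) \<longrightarrow> la $ idx j \<le> la $ idx i"
  shows "\<exists>\<gamma>::real^'n.
     (\<forall>k. ((\<lambda>t. exp (kappaB \<mu> (diag_mat (la + t *\<^sub>R axis k 1)))) has_real_derivative \<gamma> $ k) (at 0)) \<and>
     (\<integral>U. bingham_density \<mu> A U *\<^sub>R (U ** transpose U) \<partial>\<mu>)
        = exp (- kappaB \<mu> A) *\<^sub>R (Ua ** diag_mat \<gamma> ** transpose Ua) \<and>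
     (\<forall>i j. 1 \<le> i \<and> i \<le> j \<and> j \<le> CARD('n) \<longrightarrow> \<gamma> $ idx j \<le> \<gamma> $ idx i)"
proof (intro exI conjI allI impI)
  note \<mu> = assms(2) and Ua = assms(4)
  show "((\<lambda>t. exp (kappaB \<mu> (diag_mat (la + t *\<^sub>R axis k 1)))) has_real_derivative bingham_gamma \<mu> la $ k) (at 0)" for k
    by (rule has_real_derivative_exp_kappaB_diag_mat[OF \<mu>])
  show "bingham_gamma \<mu> la $ idx j \<le> bingham_gamma \<mu> la $ idx i"
    if "1 \<le> i \<and> i \<le> j \<and> j \<le> CARD('n)" for i j
    using bingham_gamma_mono[OF \<mu>] assms(7) that by blast
  have "(\<integral>U. etr (transpose U ** A ** U) *\<^sub>R (U ** transpose U) \<partial>\<mu>)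
      = (\<integral>V. etr (transpose (Ua ** V) ** A ** (Ua ** V)) *\<^sub>R ((Ua ** V) ** transpose (Ua ** V)) \<partial>\<mu>)"
    by (rule integral_uniform_stiefel_orthogonal[OF \<mu> _ Ua]) (intro continuous_intros)
  also have "\<dots> = (\<integral>V. Ua ** (exp (trace_diag_form la V) *\<^sub>R (V ** transpose V)) ** transpose Ua \<partial>\<mu>)"
    using assms(5) by (simp add: etr_outer_orthogonal_mult[OF Ua])
  also have "\<dots> = Ua ** (\<integral>V. exp (trace_diag_form la V) *\<^sub>R (V ** transpose V) \<partial>\<mu>) ** transpose Ua"
    by (rule integral_bounded_linear[OF bounded_linear_matrix_sandwich integrable_uniform_stiefel[OF \<mu>]])
       (intro continuous_intros)
  also have "\<dots> = Ua ** diag_mat (bingham_gamma \<mu> la) ** transpose Ua"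
    by (simp add: integral_exp_trace_diag_form_outer[OF \<mu>])
  finally show "(\<integral>U. bingham_density \<mu> A U *\<^sub>R (U ** transpose U) \<partial>\<mu>)
      = exp (- kappaB \<mu> A) *\<^sub>R (Ua ** diag_mat (bingham_gamma \<mu> la) ** transpose Ua)"
    by (simp add: bingham_density_def flip: scaleR_scaleR)
qed

end
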